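(* Let $\mu\in(0,1)$ and $\Lambda>0$. For every $x>0$, $$\int_0^\infty\theta_\mu\big(e^{-\Lambda u}\big)e^{-ux}\,du=\frac1\Lambda\,\frac{\pi\sin(\pi\mu)}{\cos\!\big(\pi\sqrt{\mu^2-\tfrac{4x}{\Lambda}}\big)-\cos(\pi\mu)}.$$
   Context: $\theta_\mu(q):=\sum_{n\in\mathbb Z}\big(n+\frac\mu2\big)q^{n(n+\mu)}$ for $|q|<1$. The expression $\cos(\pi\sqrt z)$ denotes the entire function $\sum_{n\ge0}(-\pi^2z)^n/(2n)!$. *)

theory Defs
  imports "HOL-Analysis.Analysis"
begin

definition theta_mu :: "real \<Rightarrow> real \<Rightarrow> real" where
  "theta_mu \<mu> q = (\<Sum>\<^sub>\<infinity>n::int. (of_int n + \<mu> / 2) * q powr (of_int n * (of_int n + \<mu>)))"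

text \<open>The entire function cos(pi sqrt z) = sum_n (-pi^2 z)^n / (2n)!, on real arguments.\<close>
definition cos_pi_sqrt :: "real \<Rightarrow> real" where
  "cos_pi_sqrt z = (\<Sum>n. (- (pi\<^sup>2) * z) ^ n / fact (2 * n))"

end

theory Submission
  imports Defs "HOL-Real_Asymp.Real_Asymp"
begin

text \<open>
  Pairing the theta terms \<open>n = k\<close> and \<open>n = -k-1\<close> turns the integrand into
  \<open>\<Sum>k. (k + \<mu>/2) e^(-A k u) - (k + 1 - \<mu>/2) e^(-B k u)\<close>, where
  \<open>A k = \<Lambda> k (k + \<mu>) + x\<close> and \<open>B k = \<Lambda> (k + 1) (k + 1 - \<mu>) + x\<close>.
  The paired series has a majorant whose integrals are \<open>O(1/k\<^sup>2)\<close>, so it can be integrated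
  termwise by dominated convergence. Factoring \<open>A k = \<Lambda> (k + b) (k + c)\<close> over the complex
  numbers, with \<open>b + c = \<mu>\<close> and \<open>b c = x / \<Lambda>\<close>, splits every integrated term into partial
  fractions, and the expansion \<open>\<pi> cot (\<pi> z) = \<Sum>k. 1/(z + k) - 1/(k + 1 - z)\<close>, obtained by
  differentiating the reflection formula for \<open>\<Gamma>\<close>, sums the series to
  \<open>(\<pi> / (2\<Lambda>)) (cot (\<pi> b) + cot (\<pi> c)) = (\<pi> / \<Lambda>) sin (\<pi> \<mu>) / (cos (\<pi> (b - c)) - cos (\<pi> \<mu>))\<close>,
  where \<open>(b - c)\<^sup>2 = \<mu>\<^sup>2 - 4 x / \<Lambda>\<close>.
\<close>

lemma Digamma_reflection_complex:
  fixes z :: complex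
  assumes "z \<notin> \<int>"
  shows "Digamma (1 - z) - Digamma z = of_real pi * cot (of_real pi * z)"
proof -
  have poles: "z \<notin> \<int>\<^sub>\<le>\<^sub>0" "1 - z \<notin> \<int>\<^sub>\<le>\<^sub>0"
    using assms nonpos_Ints_subset_Ints Ints_diff[of 1 "1 - z"] by auto
  have sin_nz: "sin (of_real pi * z) \<noteq> 0"
    using assms by (subst sin_eq_0) auto
  have "((\<lambda>w. Gamma w * Gamma (1 - w)) has_field_derivative
          Gamma z * Gamma (1 - z) * (Digamma z - Digamma (1 - z))) (at z)"
    using poles by (auto intro!: derivative_eq_intros simp: algebra_simps)
  moreover have "((\<lambda>w. Gamma w * Gamma (1 - w)) has_field_derivative
          - (of_real pi)\<^sup>2 * cos (of_real pi * z) / (sin (of_real pi * z))\<^sup>2) (at z)"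
    unfolding Gamma_reflection_complex using sin_nz
    by (auto intro!: derivative_eq_intros simp: power2_eq_square)
  ultimately have "Gamma z * Gamma (1 - z) * (Digamma z - Digamma (1 - z))
      = - (of_real pi)\<^sup>2 * cos (of_real pi * z) / (sin (of_real pi * z))\<^sup>2"
    by (rule DERIV_unique)
  then have "(Digamma (1 - z) - Digamma z) * (of_real pi / sin (of_real pi * z))
      = of_real pi * cot (of_real pi * z) * (of_real pi / sin (of_real pi * z))"
    using sin_nz unfolding Gamma_reflection_complex cot_def
    by (simp add: field_simps power2_eq_square)
  then show ?thesis
    using sin_nz by simp
qed

lemma sums_pi_cot:
  fixes b :: complex
  assumes "b \<notin> \<int>"
  shows "(\<lambda>k. 1 / (b + of_nat k) - 1 / (of_nat k + 1 - b)) sums (of_real pi * cot (of_real pi * b))"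
proof -
  have Digamma_sums: "(\<lambda>k. inverse (of_nat (Suc k)) - inverse (z + of_nat k)) sums (Digamma z + euler_mascheroni)"
    if "z \<noteq> 0" for z :: complex
    using summable_sums[OF summable_Digamma[OF that]] by (simp add: Digamma_def)
  have "b \<noteq> 0" "1 - b \<noteq> 0"
    using assms Ints_0 Ints_1 by (metis, metis eq_iff_diff_eq_0)
  from sums_diff[OF Digamma_sums[OF \<open>1 - b \<noteq> 0\<close>] Digamma_sums[OF \<open>b \<noteq> 0\<close>]] show ?thesis
    using Digamma_reflection_complex[OF assms] by (simp add: divide_inverse algebra_simps)
qed

lemma cot_add_cot:
  fixes u v :: "'a :: {real_normed_field, banach}"
  assumes "sin u \<noteq> 0" "sin v \<noteq> 0"
  shows "cot u + cot v = 2 * sin (u + v) / (cos (u - v) - cos (u + v))"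
proof -
  have "cos (u - v) - cos (u + v) = 2 * sin u * sin v"
    by (simp add: cos_diff cos_add)
  then show ?thesis
    using assms by (simp add: cot_def sin_add field_simps)
qed

lemma sums_pi_cot_pair:
  fixes b c :: complex
  assumes "b \<notin> \<int>" and "c \<notin> \<int>"
  shows "(\<lambda>k. (1 / (b + of_nat k) - 1 / (of_nat k + 1 - b)) + (1 / (c + of_nat k) - 1 / (of_nat k + 1 - c)))
           sums (2 * of_real pi * sin (of_real pi * (b + c))
                 / (cos (of_real pi * (b - c)) - cos (of_real pi * (b + c))))"
proof -
  have "sin (of_real pi * z) \<noteq> 0" if "z \<notin> \<int>" for z :: complex
    using that by (subst sin_eq_0) auto
  then have "of_real pi * cot (of_real pi * b) + of_real pi * cot (of_real pi * c)
      = 2 * of_real pi * sin (of_real pi * (b + c)) / (cos (of_real pi * (b - c)) - cos (of_real pi * (b + c)))"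
    using assms by (simp add: cot_add_cot flip: distrib_left right_diff_distrib)
  with sums_add[OF sums_pi_cot[OF assms(1)] sums_pi_cot[OF assms(2)]] show ?thesis
    by simp
qed

lemma cos_eq_cos_pi_sqrt:
  fixes a :: complex
  assumes "a\<^sup>2 = of_real z"
  shows "cos (of_real pi * a) = of_real (cos_pi_sqrt z)"
proof -
  have "(\<lambda>n. (- 1) ^ n / fact (2 * n) * (of_real pi * a) ^ (2 * n)) sums cos (of_real pi * a)"
    using sums_group[OF cos_converges[of "of_real pi * a"], of 2]
    by (simp add: cos_coeff_def ac_simps scaleR_conv_of_real)
  moreover have "(- 1) ^ n / fact (2 * n) * (of_real pi * a) ^ (2 * n)
      = of_real ((- (pi\<^sup>2) * z) ^ n / fact (2 * n))" for n
  proof -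
    have "(of_real pi * a) ^ (2 * n) = of_real ((pi\<^sup>2 * z) ^ n)"
      by (simp add: power_mult power_mult_distrib assms)
    moreover have "(- (pi\<^sup>2) * z) ^ n = (- 1) ^ n * (pi\<^sup>2 * z) ^ n"
      by (simp flip: power_mult_distrib)
    ultimately show ?thesis
      by simp
  qed
  ultimately have "(\<lambda>n. of_real ((- (pi\<^sup>2) * z) ^ n / fact (2 * n))) sums cos (of_real pi * a)"
    by simp
  moreover from this have "summable (\<lambda>n. (- (pi\<^sup>2) * z) ^ n / fact (2 * n))"
    using sums_summable summable_of_real_iff by blast
  ultimately show ?thesis
    unfolding cos_pi_sqrt_def by (metis sums_of_real summable_sums sums_unique2)
qed

lemma not_Ints_if_sum_prod:
  fixes b c :: complex and \<mu> p :: real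
  assumes "b + c = of_real \<mu>" "b * c = of_real p" "0 < \<mu>" "\<mu> < 1" "0 < p"
  shows "b \<notin> \<int>"
proof
  assume "b \<in> \<int>"
  then obtain n where n: "b = of_int n"
    by (auto elim: Ints_cases)
  with assms(1) have "c = of_real (\<mu> - n)"
    by (simp add: algebra_simps)
  with assms(2) n have "p = n * (\<mu> - n)"
    by (metis of_real_eq_iff of_real_mult of_real_of_int_eq)
  moreover have "n * (\<mu> - n) \<le> 0"
  proof (cases "n \<le> 0")
    case True
    then show ?thesis using assms(3) by (simp add: mult_nonpos_nonneg)
  next
    case False
    then show ?thesis using assms(4) by (simp add: mult_nonneg_nonpos)
  qed
  ultimately show False
    using assms(5) by simp
qed

lemma has_integral_Ici_iff_Ioi:
  fixes f :: "real \<Rightarrow> 'a::banach"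
  shows "(f has_integral I) {a..} \<longleftrightarrow> (f has_integral I) {a<..}"
  by (rule has_integral_spike_set_eq; rule negligible_subset[OF negligible_sing[of a]]) auto

lemma has_integral_exp_neg_Ioi:
  fixes c :: real
  assumes "0 < c"
  shows "((\<lambda>u. exp (- c * u)) has_integral 1 / c) {0<..}"
  using has_integral_exp_minus_to_infinity[OF assms, of 0] by (simp flip: has_integral_Ici_iff_Ioi)

lemma has_integral_suminf_dominated:
  fixes f d :: "nat \<Rightarrow> 'a::euclidean_space \<Rightarrow> real"
  assumes f: "\<And>k. (f k has_integral I k) S"
    and d: "\<And>k. (d k has_integral D k) S"
    and dominated: "\<And>k u. u \<in> S \<Longrightarrow> \<bar>f k u\<bar> \<le> d k u"
    and summable_d: "\<And>u. u \<in> S \<Longrightarrow> summable (\<lambda>k. d k u)"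
    and summable_D: "summable D"
  shows "((\<lambda>u. \<Sum>k. f k u) has_integral (\<Sum>k. I k)) S"
proof -
  define h where "h u = (\<Sum>k. d k u)" for u
  have d_nonneg: "0 \<le> d k u" if "u \<in> S" for k u
    using dominated[OF that, of k] by linarith
  have partial_d: "((\<lambda>u. \<Sum>k<N. d k u) has_integral (\<Sum>k<N. D k)) S" for N
    by (intro has_integral_sum d) auto
  have partial_f: "((\<lambda>u. \<Sum>k<N. f k u) has_integral (\<Sum>k<N. I k)) S" for N
    by (intro has_integral_sum f) auto
  have h_integral: "(h has_integral (\<Sum>k. D k)) S"
  proof (rule has_integral_monotone_convergence_increasing[OF partial_d])
    show "(\<Sum>k<N. d k u) \<le> (\<Sum>k<Suc N. d k u)" if "u \<in> S" for N u
      using d_nonneg[OF that, of N] by simp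
    show "(\<lambda>N. \<Sum>k<N. d k u) \<longlonglongrightarrow> h u" if "u \<in> S" for u
      unfolding h_def by (rule summable_LIMSEQ[OF summable_d[OF that]])
    show "(\<lambda>N. \<Sum>k<N. D k) \<longlonglongrightarrow> (\<Sum>k. D k)"
      by (rule summable_LIMSEQ[OF summable_D])
  qed
  have partial_f_bounded: "norm (\<Sum>k<N. f k u) \<le> h u" if "u \<in> S" for N u
  proof -
    have "norm (\<Sum>k<N. f k u) \<le> (\<Sum>k<N. d k u)"
      using dominated[OF that] by (simp add: sum_abs[THEN order_trans] sum_mono)
    also have "\<dots> \<le> h u"
      unfolding h_def using d_nonneg[OF that] summable_d[OF that] by (intro sum_le_suminf) auto
    finally show ?thesis .
  qed
  have partial_f_limit: "(\<lambda>N. \<Sum>k<N. f k u) \<longlonglongrightarrow> (\<Sum>k. f k u)" if "u \<in> S" for u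
    using dominated[OF that]
    by (intro summable_LIMSEQ summable_comparison_test'[where N = 0, OF summable_d[OF that]]) simp
  note limit = dominated_convergence[OF has_integral_integrable[OF partial_f]
      has_integral_integrable[OF h_integral] partial_f_bounded partial_f_limit]
  from limit have "(\<lambda>u. \<Sum>k. f k u) integrable_on S"
    and "(\<lambda>N. \<Sum>k<N. I k) \<longlonglongrightarrow> integral S (\<lambda>u. \<Sum>k. f k u)"
    by (simp_all add: integral_unique[OF partial_f])
  then show ?thesis
    by (simp add: sums_def sums_unique[symmetric] has_integral_integral)
qed

lemma has_sum_int_from_nat_halves:
  fixes f :: "int \<Rightarrow> 'a::banach"
  assumes "summable (\<lambda>k. norm (f (int k)))" and "summable (\<lambda>k. norm (f (- int k - 1)))"
  shows "(f has_sum (\<Sum>k. f (int k) + f (- int k - 1))) UNIV"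
proof -
  have nonneg_part: "(f has_sum (\<Sum>k. f (int k))) (range int)"
    using norm_summable_imp_has_sum[OF assms(1) summable_sums[OF summable_norm_cancel[OF assms(1)]]]
    by (subst has_sum_reindex) (auto simp: o_def)
  have neg_part: "(f has_sum (\<Sum>k. f (- int k - 1))) (range (\<lambda>k. - int k - 1))"
    using norm_summable_imp_has_sum[OF assms(2) summable_sums[OF summable_norm_cancel[OF assms(2)]]]
    by (subst has_sum_reindex) (auto simp: o_def inj_on_def)
  have "range int \<inter> range (\<lambda>k. - int k - 1) = {}"
    by auto
  from has_sum_Un_disjoint[OF nonneg_part neg_part this]
  have "(f has_sum (\<Sum>k. f (int k)) + (\<Sum>k. f (- int k - 1))) (range int \<union> range (\<lambda>k. - int k - 1))" .
  moreover have "range int \<union> range (\<lambda>k. - int k - 1) = UNIV"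
  proof -
    have "n \<in> range int \<union> range (\<lambda>k. - int k - 1)" for n
    proof (cases "0 \<le> n")
      case True
      then show ?thesis by (auto intro!: image_eqI[where x = "nat n"])
    next
      case False
      then show ?thesis by (auto intro!: image_eqI[where x = "nat (- n - 1)"])
    qed
    then show ?thesis by auto
  qed
  ultimately show ?thesis
    using assms by (simp add: suminf_add summable_norm_cancel)
qed

lemma summable_if_bigo_inverse_square:
  fixes f :: "nat \<Rightarrow> real"
  assumes "f \<in> O(\<lambda>k. 1 / real k ^ 2)"
  shows "summable f"
proof (rule summable_comparison_test_bigo[OF _ assms])
  have "summable (\<lambda>k. inverse (real k ^ 2))"
    by (rule inverse_power_summable) simp
  then show "summable (\<lambda>k. norm (1 / real k ^ 2))"
    by (simp add: divide_inverse)
qed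

locale theta_laplace =
  fixes \<mu> \<Lambda> x :: real
  assumes mu_pos: "0 < \<mu>" and mu_less_1: "\<mu> < 1" and Lambda_pos: "0 < \<Lambda>" and x_pos: "0 < x"
begin

text \<open>\<open>A k\<close> and \<open>B k\<close> are the decay rates of the theta terms \<open>n = k\<close> and \<open>n = -k-1\<close>
  after multiplication by \<open>e^(-u x)\<close>.\<close>

definition A :: "nat \<Rightarrow> real" where
  "A k = \<Lambda> * real k * (real k + \<mu>) + x"

definition B :: "nat \<Rightarrow> real" where
  "B k = \<Lambda> * (real k + 1) * (real k + 1 - \<mu>) + x"

definition paired_term :: "nat \<Rightarrow> real \<Rightarrow> real" where
  "paired_term k u = (real k + \<mu> / 2) * exp (- A k * u) - (real k + 1 - \<mu> / 2) * exp (- B k * u)"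

text \<open>Separately the theta terms have integrals of order \<open>1/k\<close>; a pair equals
  \<open>(\<mu> - 1) e^(-A k u) + (k + 1 - \<mu>/2) (e^(-A k u) - e^(-B k u))\<close>, and both parts have
  integrals of order \<open>1/k\<^sup>2\<close>.\<close>

definition paired_majorant :: "nat \<Rightarrow> real \<Rightarrow> real" where
  "paired_majorant k u =
     (1 - \<mu>) * exp (- A k * u) + (real k + 1 - \<mu> / 2) * (exp (- A k * u) - exp (- B k * u))"

lemma A_pos: "0 < A k"
  using mu_pos Lambda_pos x_pos by (simp add: A_def add_nonneg_pos)

lemma A_le_B: "A k \<le> B k"
proof -
  have "B k - A k = \<Lambda> * (2 * real k + 1) * (1 - \<mu>)"
    by (simp add: A_def B_def algebra_simps)
  moreover have "0 \<le> \<Lambda> * (2 * real k + 1) * (1 - \<mu>)"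
    using Lambda_pos mu_less_1 by simp
  ultimately show ?thesis
    by linarith
qed

lemma B_pos: "0 < B k"
  using A_pos A_le_B by (rule less_le_trans)

lemma theta_mult_exp_eq_suminf:
  assumes "0 < u"
  shows "theta_mu \<mu> (exp (- \<Lambda> * u)) * exp (- u * x) = (\<Sum>k. paired_term k u)"
proof -
  define F where "F n = (of_int n + \<mu> / 2) * exp (- \<Lambda> * u) powr (of_int n * (of_int n + \<mu>))" for n
  have F_pos: "F (int k) = (real k + \<mu> / 2) * exp (- (\<Lambda> * u) * (real k * (real k + \<mu>)))" for k
    by (simp add: F_def powr_def)
  have F_neg: "F (- int k - 1)
      = - ((real k + 1 - \<mu> / 2) * exp (- (\<Lambda> * u) * ((real k + 1) * (real k + 1 - \<mu>))))" for k
    by (simp add: F_def powr_def algebra_simps)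
  have pos_summable: "summable (\<lambda>k. norm (F (int k)))"
    unfolding F_pos using mu_pos Lambda_pos \<open>0 < u\<close>
    by (intro summable_if_bigo_inverse_square) (simp add: abs_mult, real_asymp)
  moreover have neg_summable: "summable (\<lambda>k. norm (F (- int k - 1)))"
    unfolding F_neg using mu_less_1 Lambda_pos \<open>0 < u\<close>
    by (intro summable_if_bigo_inverse_square) (simp add: abs_mult, real_asymp)
  ultimately have "(F has_sum (\<Sum>k. F (int k) + F (- int k - 1))) UNIV"
    by (rule has_sum_int_from_nat_halves)
  then have "theta_mu \<mu> (exp (- \<Lambda> * u)) = (\<Sum>k. F (int k) + F (- int k - 1))"
    unfolding theta_mu_def F_def by (rule infsumI)
  moreover have "(F (int k) + F (- int k - 1)) * exp (- u * x) = paired_term k u" for k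
    unfolding F_pos F_neg paired_term_def A_def B_def by (simp add: algebra_simps flip: exp_add)
  ultimately show ?thesis
    using pos_summable neg_summable
    by (simp add: suminf_mult2 summable_add summable_norm_cancel)
qed

lemma paired_term_has_integral:
  "(paired_term k has_integral (real k + \<mu> / 2) / A k - (real k + 1 - \<mu> / 2) / B k) {0<..}"
  using has_integral_diff[OF has_integral_mult_right[OF has_integral_exp_neg_Ioi[OF A_pos]]
                             has_integral_mult_right[OF has_integral_exp_neg_Ioi[OF B_pos]]]
  by (simp add: paired_term_def[abs_def])

lemma paired_majorant_has_integral:
  "(paired_majorant k has_integral (1 - \<mu>) / A k + (real k + 1 - \<mu> / 2) * (1 / A k - 1 / B k)) {0<..}"
  using has_integral_add[OF has_integral_mult_right[OF has_integral_exp_neg_Ioi[OF A_pos]]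
          has_integral_mult_right[OF has_integral_diff[OF has_integral_exp_neg_Ioi[OF A_pos]
                                                          has_integral_exp_neg_Ioi[OF B_pos]]]]
  by (simp add: paired_majorant_def[abs_def])

lemma abs_paired_term_le_majorant:
  assumes "0 \<le> u"
  shows "\<bar>paired_term k u\<bar> \<le> paired_majorant k u"
proof -
  have "exp (- B k * u) \<le> exp (- A k * u)"
    using A_le_B assms by (simp add: mult_right_mono)
  then have "0 \<le> (real k + 1 - \<mu> / 2) * (exp (- A k * u) - exp (- B k * u))"
    using mu_less_1 by simp
  moreover have "0 \<le> (1 - \<mu>) * exp (- A k * u)"
    using mu_less_1 by simp
  moreover have "paired_term k u
      = - ((1 - \<mu>) * exp (- A k * u)) + (real k + 1 - \<mu> / 2) * (exp (- A k * u) - exp (- B k * u))"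
    by (simp add: paired_term_def algebra_simps)
  ultimately show ?thesis
    unfolding paired_majorant_def by linarith
qed

lemma summable_paired_majorant:
  assumes "0 < u"
  shows "summable (\<lambda>k. paired_majorant k u)"
proof (rule summable_comparison_test')
  show "summable (\<lambda>k. (real k + 2) * exp (- A k * u))"
    unfolding A_def using mu_pos Lambda_pos x_pos assms
    by (intro summable_if_bigo_inverse_square) real_asymp
  show "norm (paired_majorant k u) \<le> (real k + 2) * exp (- A k * u)" for k
  proof -
    have "0 \<le> paired_majorant k u"
      using abs_paired_term_le_majorant[of u k] assms by linarith
    moreover have "paired_majorant k u \<le> (1 - \<mu>) * exp (- A k * u) + (real k + 1 - \<mu> / 2) * exp (- A k * u)"
      unfolding paired_majorant_def using mu_less_1 by (simp add: mult_left_mono)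
    moreover have "\<dots> \<le> (real k + 2) * exp (- A k * u)"
      using mu_pos by (simp add: algebra_simps)
    ultimately show ?thesis
      by simp
  qed
qed

lemma summable_paired_majorant_integrals:
  "summable (\<lambda>k. (1 - \<mu>) / A k + (real k + 1 - \<mu> / 2) * (1 / A k - 1 / B k))"
  unfolding A_def B_def using mu_pos mu_less_1 Lambda_pos x_pos
  by (intro summable_if_bigo_inverse_square) real_asymp

lemma A_eq_of_roots:
  fixes b c :: complex
  assumes "b + c = of_real \<mu>" and "b * c = of_real (x / \<Lambda>)"
  shows "of_real (A k) = of_real \<Lambda> * ((of_nat k + b) * (of_nat k + c))"
proof -
  have "(of_nat k + b) * (of_nat k + c) = of_nat k * of_nat k + of_nat k * (b + c) + b * c"
    by (simp add: algebra_simps)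
  then show ?thesis
    using Lambda_pos unfolding assms A_def by (simp add: field_simps)
qed

lemma B_eq_of_roots:
  fixes b c :: complex
  assumes "b + c = of_real \<mu>" and "b * c = of_real (x / \<Lambda>)"
  shows "of_real (B k) = of_real \<Lambda> * ((of_nat k + 1 - b) * (of_nat k + 1 - c))"
proof -
  have "(of_nat k + 1 - b) * (of_nat k + 1 - c)
      = (of_nat k + 1) * (of_nat k + 1) - (of_nat k + 1) * (b + c) + b * c"
    by (simp add: algebra_simps)
  then show ?thesis
    using Lambda_pos unfolding assms B_def by (simp add: field_simps)
qed

lemma paired_term_integral_partial_fractions:
  fixes b c :: complex
  assumes sum: "b + c = of_real \<mu>" and prod: "b * c = of_real (x / \<Lambda>)"
  shows "of_real ((real k + \<mu> / 2) / A k - (real k + 1 - \<mu> / 2) / B k)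
      = 1 / (2 * of_real \<Lambda>) * ((1 / (b + of_nat k) - 1 / (of_nat k + 1 - b))
                                + (1 / (c + of_nat k) - 1 / (of_nat k + 1 - c)))"
proof -
  have half_sum_over_prod: "((p + q) / 2) / (of_real \<Lambda> * (p * q)) = 1 / (2 * of_real \<Lambda>) * (1 / p + 1 / q)"
    if "p \<noteq> 0" "q \<noteq> 0" for p q :: complex
    using that Lambda_pos by (simp add: field_simps)
  note A_eq = A_eq_of_roots[OF sum prod] and B_eq = B_eq_of_roots[OF sum prod]
  have nonzero: "of_nat k + b \<noteq> 0" "of_nat k + c \<noteq> 0" "of_nat k + 1 - b \<noteq> 0" "of_nat k + 1 - c \<noteq> 0"
    using A_eq[of k] B_eq[of k] A_pos[of k] B_pos[of k] by auto
  have numerators: "of_real (real k + \<mu> / 2) = ((of_nat k + b) + (of_nat k + c)) / 2"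
    "of_real (real k + 1 - \<mu> / 2) = ((of_nat k + 1 - b) + (of_nat k + 1 - c)) / 2"
    by (simp_all add: algebra_simps flip: sum)
  have "of_real ((real k + \<mu> / 2) / A k - (real k + 1 - \<mu> / 2) / B k)
      = (of_real (real k + \<mu> / 2) / of_real (A k) - of_real (real k + 1 - \<mu> / 2) / of_real (B k) :: complex)"
    by simp
  also have "\<dots> = 1 / (2 * of_real \<Lambda>) * (1 / (of_nat k + b) + 1 / (of_nat k + c))
      - 1 / (2 * of_real \<Lambda>) * (1 / (of_nat k + 1 - b) + 1 / (of_nat k + 1 - c))"
    unfolding numerators A_eq B_eq
    by (simp only: half_sum_over_prod[OF nonzero(1,2)] half_sum_over_prod[OF nonzero(3,4)])
  finally show ?thesis
    by (simp add: algebra_simps)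
qed

lemma paired_term_integrals_sums:
  "(\<lambda>k. (real k + \<mu> / 2) / A k - (real k + 1 - \<mu> / 2) / B k) sums
     ((1 / \<Lambda>) * (pi * sin (pi * \<mu>) / (cos_pi_sqrt (\<mu>\<^sup>2 - 4 * x / \<Lambda>) - cos (pi * \<mu>))))"
proof -
  define a where "a = csqrt (of_real (\<mu>\<^sup>2 / 4 - x / \<Lambda>))"
  define b where "b = of_real (\<mu> / 2) - a"
  define c where "c = of_real (\<mu> / 2) + a"
  have sum: "b + c = of_real \<mu>"
    by (simp add: b_def c_def flip: of_real_add)
  have "b * c = of_real (\<mu> / 2) ^ 2 - a ^ 2"
    by (simp add: b_def c_def power2_eq_square algebra_simps)
  also have "\<dots> = of_real (x / \<Lambda>)"
    by (simp add: a_def power_divide)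
  finally have prod: "b * c = of_real (x / \<Lambda>)" .
  have "b \<notin> \<int>" "c \<notin> \<int>"
    using not_Ints_if_sum_prod[OF sum prod] not_Ints_if_sum_prod[of c b \<mu> "x / \<Lambda>"]
      sum prod mu_pos mu_less_1 Lambda_pos x_pos by (simp_all add: add.commute mult.commute)
  have "(b - c)\<^sup>2 = (b + c)\<^sup>2 - 4 * (b * c)"
    by (simp add: power2_eq_square algebra_simps)
  then have "cos (of_real pi * (b - c)) = of_real (cos_pi_sqrt (\<mu>\<^sup>2 - 4 * x / \<Lambda>))"
    unfolding sum prod by (intro cos_eq_cos_pi_sqrt) simp
  then have "(\<lambda>k. of_real ((real k + \<mu> / 2) / A k - (real k + 1 - \<mu> / 2) / B k)) sums
      (of_real ((1 / \<Lambda>) * (pi * sin (pi * \<mu>)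
                 / (cos_pi_sqrt (\<mu>\<^sup>2 - 4 * x / \<Lambda>) - cos (pi * \<mu>)))) :: complex)"
    using sums_mult[OF sums_pi_cot_pair[OF \<open>b \<notin> \<int>\<close> \<open>c \<notin> \<int>\<close>], of "1 / (2 * of_real \<Lambda>)"]
    unfolding paired_term_integral_partial_fractions[OF sum prod] sum
    by (simp flip: sin_of_real cos_of_real)
  then show ?thesis
    by (simp only: sums_of_real_iff)
qed

end

theorem mainTheorem14:
  fixes \<mu> \<Lambda> x :: real
  assumes "0 < \<mu>" and "\<mu> < 1" and "0 < \<Lambda>" and "0 < x"
  shows "((\<lambda>u. theta_mu \<mu> (exp (- \<Lambda> * u)) * exp (- u * x)) has_integral
           (1 / \<Lambda>) * (pi * sin (pi * \<mu>) /
             (cos_pi_sqrt (\<mu>\<^sup>2 - 4 * x / \<Lambda>) - cos (pi * \<mu>)))) {0..}"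
proof -
  interpret theta_laplace \<mu> \<Lambda> x
    using assms by unfold_locales
  have "((\<lambda>u. \<Sum>k. paired_term k u) has_integral
          (\<Sum>k. (real k + \<mu> / 2) / A k - (real k + 1 - \<mu> / 2) / B k)) {0<..}"
    by (rule has_integral_suminf_dominated[OF paired_term_has_integral paired_majorant_has_integral
          abs_paired_term_le_majorant summable_paired_majorant summable_paired_majorant_integrals]) auto
  also have "(\<Sum>k. (real k + \<mu> / 2) / A k - (real k + 1 - \<mu> / 2) / B k)
      = (1 / \<Lambda>) * (pi * sin (pi * \<mu>) / (cos_pi_sqrt (\<mu>\<^sup>2 - 4 * x / \<Lambda>) - cos (pi * \<mu>)))"
    using paired_term_integrals_sums by (rule sums_unique[symmetric])
  finally have "((\<lambda>u. theta_mu \<mu> (exp (- \<Lambda> * u)) * exp (- u * x)) has_integral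
      (1 / \<Lambda>) * (pi * sin (pi * \<mu>) / (cos_pi_sqrt (\<mu>\<^sup>2 - 4 * x / \<Lambda>) - cos (pi * \<mu>)))) {0<..}"
    by (rule has_integral_eq[rotated]) (simp only: greaterThan_iff theta_mult_exp_eq_suminf)
  then show ?thesis
    by (simp add: has_integral_Ici_iff_Ioi)
qed

end
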